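(* Let $n$ be even and $F\colon\mathbb F_2^n\to\mathbb F_2^n$ a quadratic APN function with amplitude distribution $[0^{k_0},2^{k_2},\dots,n^{k_n}]$. Then (i) $\sum_{i=1}^{n/2}k_{2i}(2^{2i}-1)=2^n-1$; (ii) if $i>n/2$ then $k_i\le1$; (iii) if $i\neq j$ and $k_i,k_j\ge1$, then $i+j\le n$.
   Context: $\langle\cdot,\cdot\rangle$ is the standard dot product. $F$ is APN if for every $a\ne0$ and $c$, $F(x)+F(x+a)=c$ has at most 2 solutions; quadratic if each component $F_b(x)=\langle b,F(x)\rangle$ is a quadratic form plus an affine function. For quadratic $F$ and fixed $b$ there is $k$ with $|W_F(b,a)|\in\{0,2^{(n+k)/2}\}$ for all $a$, where $W_F(b,a)=\sum_x(-1)^{F_b(x)+\langle x,a\rangle}$; $2^{(n+k)/2}$ is the amplitude of $F_b$. The amplitude distribution $[0^{k_0},1^{k_1},\dots,n^{k_n}]$ means exactly $k_i$ nonzero $b$ give amplitude $2^{(n+i)/2}$ (here only even $i$ occur). *)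

theory Defs
  imports "HOL-Analysis.Analysis" "HOL-Library.Z2"
begin

text \<open>F_2 is the two-element field bit from HOL-Library.Z2; F_2^n is bit^'n with n = CARD('n).\<close>

lemma UNIV_bit_eq: "(UNIV :: bit set) = {0, 1}"
proof -
  have "x = 0 \<or> x = 1" for x :: bit by (cases x) auto
  then show ?thesis by auto
qed

instance bit :: finite
  by standard (simp add: UNIV_bit_eq)

definition dotp :: "bit ^ 'n \<Rightarrow> bit ^ 'n \<Rightarrow> bit" where
  "dotp x y = (\<Sum>i\<in>UNIV. x $ i * y $ i)"

definition component :: "(bit ^ 'n \<Rightarrow> bit ^ 'n) \<Rightarrow> bit ^ 'n \<Rightarrow> bit ^ 'n \<Rightarrow> bit" where
  "component F b x = dotp b (F x)"

definition is_APN :: "(bit ^ 'n \<Rightarrow> bit ^ 'n) \<Rightarrow> bool" where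
  "is_APN F \<longleftrightarrow> (\<forall>a c. a \<noteq> 0 \<longrightarrow> card {x. F x + F (x + a) = c} \<le> 2)"

definition quadratic_plus_affine :: "(bit ^ 'n \<Rightarrow> bit) \<Rightarrow> bool" where
  "quadratic_plus_affine f \<longleftrightarrow>
     (\<exists>(q :: 'n \<Rightarrow> 'n \<Rightarrow> bit) (c :: bit ^ 'n) (d :: bit).
        \<forall>x. f x = (\<Sum>i\<in>UNIV. \<Sum>j\<in>UNIV. q i j * x $ i * x $ j) + dotp c x + d)"

definition is_quadratic :: "(bit ^ 'n \<Rightarrow> bit ^ 'n) \<Rightarrow> bool" where
  "is_quadratic F \<longleftrightarrow> (\<forall>b. quadratic_plus_affine (component F b))"

definition sgn_bit :: "bit \<Rightarrow> int" where
  "sgn_bit v = (if v = 0 then 1 else -1)"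

definition walsh :: "(bit ^ 'n \<Rightarrow> bit ^ 'n) \<Rightarrow> bit ^ 'n \<Rightarrow> bit ^ 'n \<Rightarrow> int" where
  "walsh F b a = (\<Sum>x\<in>UNIV. sgn_bit (component F b x + dotp x a))"

text \<open>F_b has amplitude 2^((n+k)/2): |W_F(b,a)| \<in> {0, 2^((n+k)/2)} for all a, the
  nonzero value being attained. Stated with squares: W^2 = 2^(n+k).\<close>
definition has_amplitude_exp :: "(bit ^ 'n \<Rightarrow> bit ^ 'n) \<Rightarrow> bit ^ 'n \<Rightarrow> nat \<Rightarrow> bool" where
  "has_amplitude_exp F b k \<longleftrightarrow>
     (\<forall>a. walsh F b a = 0 \<or> (walsh F b a)\<^sup>2 = 2 ^ (CARD('n) + k)) \<and>
     (\<exists>a. (walsh F b a)\<^sup>2 = 2 ^ (CARD('n) + k))"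

definition amp_dist :: "(bit ^ 'n \<Rightarrow> bit ^ 'n) \<Rightarrow> nat \<Rightarrow> nat" where
  "amp_dist F i = card {b. b \<noteq> 0 \<and> has_amplitude_exp F b i}"

end

theory Submission
  imports Defs "HOL-Computational_Algebra.Primes"
begin

text \<open>
  For a quadratic F the map u, x \<mapsto> <b, F(x+u) + F x + F u + F 0> is the symmetric bilinear
  polar form of the component F_b. Squaring the Walsh sum and substituting y = x + u shows that
  W_F(b,a)^2 is either 0 or 2^n |V_b|, where V_b is the radical of that form, and counting the
  a of the second kind shows that |V_b| divides 2^n. So the amplitude exponent of F_b is
  log_2 |V_b|; it is even when n is, since 2^(n + k) is then a square.

  APN says that F(x+a) + F x + F a + F 0 = 0 only for x \<in> {0, a}; summing characters over b,
  this means that every a \<noteq> 0 lies in V_b for exactly one b \<noteq> 0. Hence the sets V_b - {0},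
  b \<noteq> 0, partition the nonzero vectors, which is (i), and V_b \<inter> V_c = {0} for b \<noteq> c, so that
  |V_b| |V_c| \<le> 2^n, which gives (ii) and (iii).
\<close>

text \<open>By default the simplifier rewrites + and * on bit into xor and and, which defeats
  ring normalisation.\<close>
declare add_bit_eq_xor [simp del] mult_bit_eq_and [simp del]

lemma bit_exhaust: "(x::bit) = 0 \<or> x = 1"
  by (cases x) auto

lemma bit_add_self [simp]: "(x::bit) + x = 0" "(x::bit) + (x + y) = y"
  using bit_exhaust[of x] by (auto simp: add.assoc[symmetric])

lemma vec_add_self [simp]: "(v::bit ^ 'n) + v = 0" "(v::bit ^ 'n) + (v + w) = w"
  by (simp_all add: vec_eq_iff)

lemma vec_add_eq_0_iff: "(v::bit ^ 'n) + w = 0 \<longleftrightarrow> v = w"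
  by (metis add.right_neutral vec_add_self)

lemma card_bit [simp]: "CARD(bit) = 2"
  by (simp add: UNIV_bit_eq)

lemma sgn_bit_simps [simp]: "sgn_bit 0 = 1" "sgn_bit 1 = -1"
  by (simp_all add: sgn_bit_def)

lemma sgn_bit_add: "sgn_bit (x + y) = sgn_bit x * sgn_bit y"
  using bit_exhaust[of x] bit_exhaust[of y] by auto

lemma dotp_commute: "dotp x y = dotp y x"
  by (simp add: dotp_def mult.commute)

lemma dotp_add_right: "dotp b (x + y) = dotp b x + dotp b y"
  by (simp add: dotp_def distrib_left sum.distrib)

lemma dotp_add_left: "dotp (x + y) b = dotp x b + dotp y b"
  by (simp add: dotp_commute dotp_add_right)

lemma dotp_zero [simp]: "dotp 0 x = 0" "dotp x 0 = 0"
  by (simp_all add: dotp_def)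

lemma dotp_axis: "dotp (axis i 1) v = v $ i"
proof -
  have "dotp (axis i 1) v = (\<Sum>j\<in>UNIV. if j = i then v $ i else 0)"
    unfolding dotp_def by (rule sum.cong) (auto simp: axis_def)
  then show ?thesis by simp
qed

lemma all_dotp_eq_0_iff: "(\<forall>b. dotp b v = 0) \<longleftrightarrow> v = 0"
  by (metis dotp_axis dotp_zero(2) vec_eq_iff)

lemma sum_sgn_bit_additive:
  fixes V :: "(bit ^ 'n) set" and h :: "bit ^ 'n \<Rightarrow> bit"
  assumes closed: "\<And>u v. u \<in> V \<Longrightarrow> v \<in> V \<Longrightarrow> u + v \<in> V"
    and additive: "\<And>u v. u \<in> V \<Longrightarrow> v \<in> V \<Longrightarrow> h (u + v) = h u + h v"
  shows "(\<Sum>u\<in>V. sgn_bit (h u)) = (if \<forall>u\<in>V. h u = 0 then int (card V) else 0)"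
proof (cases "\<forall>u\<in>V. h u = 0")
  case False
  then obtain u0 where u0: "u0 \<in> V" "h u0 = 1"
    using bit_exhaust by blast
  have "(\<Sum>u\<in>V. sgn_bit (h u)) = (\<Sum>u\<in>V. sgn_bit (h (u + u0)))"
    by (rule sum.reindex_bij_witness[where i="\<lambda>u. u + u0" and j="\<lambda>u. u + u0"])
       (auto simp: closed u0 add.assoc)
  also have "\<dots> = - (\<Sum>u\<in>V. sgn_bit (h u))"
    by (simp add: additive u0 sgn_bit_add sum_negf)
  finally have "(\<Sum>u\<in>V. sgn_bit (h u)) = 0"
    by simp
  then show ?thesis
    by (simp only: if_not_P[OF False])
qed simp

lemma sum_sgn_bit_dotp:
  "(\<Sum>b\<in>UNIV. sgn_bit (dotp b v)) = (if v = 0 then 2 ^ CARD('n) else 0)"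
  for v :: "bit ^ 'n"
  using sum_sgn_bit_additive[of UNIV "\<lambda>b. dotp b v"] all_dotp_eq_0_iff[of v]
  by (simp add: dotp_add_left)

definition polar :: "(bit ^ 'n \<Rightarrow> bit) \<Rightarrow> bit ^ 'n \<Rightarrow> bit ^ 'n \<Rightarrow> bit" where
  "polar f u x = f (x + u) + f x + f u + f 0"

definition polar_radical :: "(bit ^ 'n \<Rightarrow> bit) \<Rightarrow> (bit ^ 'n) set" where
  "polar_radical f = {u. \<forall>x. polar f u x = 0}"

lemma polar_commute: "polar f u x = polar f x u"
  by (simp add: polar_def ac_simps)

lemma polar_quadratic_form:
  assumes f: "\<And>x. f x = (\<Sum>i\<in>UNIV. \<Sum>j\<in>UNIV. q i j * x $ i * x $ j) + dotp c x + d"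
  shows "polar f u x = (\<Sum>i\<in>UNIV. \<Sum>j\<in>UNIV. q i j * (x $ i * u $ j + u $ i * x $ j))"
  unfolding polar_def f dotp_def
  by (simp add: algebra_simps sum.distrib)

lemma polar_add_right:
  assumes "quadratic_plus_affine f"
  shows "polar f u (x + y) = polar f u x + polar f u y"
proof -
  obtain q c d where f: "\<And>x. f x = (\<Sum>i\<in>UNIV. \<Sum>j\<in>UNIV. q i j * x $ i * x $ j) + dotp c x + d"
    using assms unfolding quadratic_plus_affine_def by blast
  have "polar f u (x + y) = (\<Sum>i\<in>UNIV. \<Sum>j\<in>UNIV.
      q i j * (x $ i * u $ j + u $ i * x $ j) + q i j * (y $ i * u $ j + u $ i * y $ j))"
    unfolding polar_quadratic_form[OF f] by (intro sum.cong refl) (simp add: algebra_simps)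
  also have "\<dots> = polar f u x + polar f u y"
    unfolding polar_quadratic_form[OF f] by (simp only: sum.distrib)
  finally show ?thesis .
qed

lemma zero_in_polar_radical [simp]: "0 \<in> polar_radical f"
  by (simp add: polar_radical_def polar_def)

lemma polar_radical_add_closed:
  assumes "quadratic_plus_affine f" "u \<in> polar_radical f" "v \<in> polar_radical f"
  shows "u + v \<in> polar_radical f"
proof -
  have "polar f (u + v) x = polar f u x + polar f v x" for x
    using polar_add_right[OF assms(1), of x u v] by (simp add: polar_commute)
  with assms(2,3) show ?thesis
    by (simp add: polar_radical_def)
qed

lemma sum_sgn_bit_polar:
  fixes f :: "bit ^ 'n \<Rightarrow> bit"
  assumes "quadratic_plus_affine f"
  shows "(\<Sum>x\<in>UNIV. sgn_bit (polar f u x)) = (if u \<in> polar_radical f then 2 ^ CARD('n) else 0)"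
  using sum_sgn_bit_additive[of UNIV "polar f u"]
  by (simp add: polar_add_right[OF assms] polar_radical_def)

definition walsh_support :: "(bit ^ 'n \<Rightarrow> bit) \<Rightarrow> (bit ^ 'n) set" where
  "walsh_support f = {a. \<forall>u\<in>polar_radical f. f u + f 0 + dotp u a = 0}"

lemma polar_radical_additive:
  assumes "u \<in> polar_radical f"
  shows "f (u + v) + f 0 = (f u + f 0) + (f v + f 0)"
proof -
  have "f (u + v) + f 0 = (f u + f 0) + (f v + f 0) + polar f u v"
    by (simp add: polar_def ac_simps)
  with assms show ?thesis
    by (simp add: polar_radical_def)
qed

lemma sum_sgn_bit_polar_radical:
  fixes f :: "bit ^ 'n \<Rightarrow> bit"
  assumes q: "quadratic_plus_affine f"
  shows "(\<Sum>u\<in>polar_radical f. sgn_bit (f u + f 0 + dotp u a))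
    = (if a \<in> walsh_support f then int (card (polar_radical f)) else 0)"
proof -
  have "(\<Sum>u\<in>polar_radical f. sgn_bit (f u + f 0 + dotp u a))
    = (if \<forall>u\<in>polar_radical f. f u + f 0 + dotp u a = 0 then int (card (polar_radical f)) else 0)"
  proof (rule sum_sgn_bit_additive)
    fix u v
    assume "u \<in> polar_radical f"
    then show "f (u + v) + f 0 + dotp (u + v) a = (f u + f 0 + dotp u a) + (f v + f 0 + dotp v a)"
      using polar_radical_additive[of u f v] by (simp add: dotp_add_left ac_simps)
  qed (rule polar_radical_add_closed[OF q])
  then show ?thesis
    by (simp add: walsh_support_def)
qed

lemma walsh_square:
  fixes f :: "bit ^ 'n \<Rightarrow> bit"
  assumes q: "quadratic_plus_affine f"
  shows "(\<Sum>x\<in>UNIV. sgn_bit (f x + dotp x a))\<^sup>2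
    = (if a \<in> walsh_support f then 2 ^ CARD('n) * int (card (polar_radical f)) else 0)"
proof -
  let ?s = "\<lambda>x. sgn_bit (f x + dotp x a)"
  let ?h = "\<lambda>u. f u + f 0 + dotp u a"
  have "(\<Sum>x\<in>UNIV. ?s x)\<^sup>2 = (\<Sum>x\<in>UNIV. \<Sum>u\<in>UNIV. ?s x * ?s (x + u))"
  proof -
    have "(\<Sum>y\<in>UNIV. ?s x * ?s y) = (\<Sum>u\<in>UNIV. ?s x * ?s (x + u))" for x
      by (rule sum.reindex_bij_witness[where i="\<lambda>u. x + u" and j="\<lambda>u. x + u"]) auto
    then show ?thesis
      by (simp add: power2_eq_square sum_product)
  qed
  also have "\<dots> = (\<Sum>x\<in>UNIV. \<Sum>u\<in>UNIV. sgn_bit (polar f u x) * sgn_bit (?h u))"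
  proof (intro sum.cong refl)
    fix x u
    have "f x + dotp x a + (f (x + u) + dotp (x + u) a) = polar f u x + ?h u"
      by (simp add: polar_def dotp_add_left ac_simps)
    then show "?s x * ?s (x + u) = sgn_bit (polar f u x) * sgn_bit (?h u)"
      by (metis sgn_bit_add)
  qed
  also have "\<dots> = (\<Sum>u\<in>UNIV. (\<Sum>x\<in>UNIV. sgn_bit (polar f u x)) * sgn_bit (?h u))"
    by (subst sum.swap) (simp add: sum_distrib_right)
  also have "\<dots> = (\<Sum>u\<in>UNIV. if u \<in> polar_radical f then 2 ^ CARD('n) * sgn_bit (?h u) else 0)"
    by (intro sum.cong) (simp_all add: sum_sgn_bit_polar[OF q])
  also have "\<dots> = 2 ^ CARD('n) * (\<Sum>u\<in>polar_radical f. sgn_bit (?h u))"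
    by (simp add: sum_distrib_left flip: sum.inter_restrict)
  also have "(\<Sum>u\<in>polar_radical f. sgn_bit (?h u))
      = (if a \<in> walsh_support f then int (card (polar_radical f)) else 0)"
    by (rule sum_sgn_bit_polar_radical[OF q])
  finally show ?thesis
    by simp
qed

lemma card_walsh_support:
  fixes f :: "bit ^ 'n \<Rightarrow> bit"
  assumes q: "quadratic_plus_affine f"
  shows "card (walsh_support f) * card (polar_radical f) = 2 ^ CARD('n)"
proof -
  let ?R = "polar_radical f"
  let ?h = "\<lambda>a u. f u + f 0 + dotp u a"
  have "(\<Sum>a\<in>UNIV. \<Sum>u\<in>?R. sgn_bit (?h a u))
      = (\<Sum>a\<in>UNIV. if a \<in> walsh_support f then int (card ?R) else 0)"
    by (simp add: sum_sgn_bit_polar_radical[OF q])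
  also have "\<dots> = int (card (walsh_support f) * card ?R)"
    by (simp add: sum.If_cases)
  finally have by_a:
    "(\<Sum>a\<in>UNIV. \<Sum>u\<in>?R. sgn_bit (?h a u)) = int (card (walsh_support f) * card ?R)" .
  have "(\<Sum>a\<in>UNIV. \<Sum>u\<in>?R. sgn_bit (?h a u))
      = (\<Sum>u\<in>?R. sgn_bit (f u + f 0) * (\<Sum>a\<in>UNIV. sgn_bit (dotp a u)))"
    by (subst sum.swap) (simp add: sgn_bit_add sum_distrib_left dotp_commute)
  also have "\<dots> = (\<Sum>u\<in>?R. if u = 0 then 2 ^ CARD('n) else 0)"
    by (intro sum.cong refl) (simp add: sum_sgn_bit_dotp)
  also have "\<dots> = 2 ^ CARD('n)"
    by simp
  finally show ?thesis
    using by_a by (metis of_nat_eq_of_nat_power_cancel_iff of_nat_numeral)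
qed

lemma walsh_support_nonempty:
  fixes f :: "bit ^ 'n \<Rightarrow> bit"
  assumes "quadratic_plus_affine f"
  shows "walsh_support f \<noteq> {}"
  using card_walsh_support[OF assms] by fastforce

lemma square_eq_power2_imp_even: "(w::int)\<^sup>2 = 2 ^ k \<Longrightarrow> even k"
proof -
  assume w: "w\<^sup>2 = 2 ^ k"
  then have "w \<noteq> 0"
    by auto
  then have "k = 2 * multiplicity 2 w"
    using arg_cong[OF w, of "multiplicity 2"]
    by (simp add: prime_elem_multiplicity_power_distrib)
  then show ?thesis
    by simp
qed

lemma card_polar_radical_eq_power2:
  fixes f :: "bit ^ 'n \<Rightarrow> bit"
  assumes q: "quadratic_plus_affine f"
  shows "\<exists>m \<le> CARD('n). card (polar_radical f) = 2 ^ m \<and> even (CARD('n) + m)"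
proof -
  have "card (polar_radical f) dvd 2 ^ CARD('n)"
    using card_walsh_support[OF q] by (metis dvd_triv_right)
  then obtain m where m: "m \<le> CARD('n)" "card (polar_radical f) = 2 ^ m"
    using divides_primepow_nat[of 2] by auto
  obtain a where "a \<in> walsh_support f"
    using walsh_support_nonempty[OF q] by blast
  then have "(\<Sum>x\<in>UNIV. sgn_bit (f x + dotp x a))\<^sup>2 = 2 ^ (CARD('n) + m)"
    using walsh_square[OF q, of a] m(2) by (simp add: power_add)
  then have "even (CARD('n) + m)"
    by (rule square_eq_power2_imp_even)
  with m show ?thesis
    by blast
qed

lemma has_amplitude_exp_iff:
  fixes F :: "bit ^ 'n \<Rightarrow> bit ^ 'n"
  assumes "is_quadratic F"
  shows "has_amplitude_exp F b k \<longleftrightarrow> card (polar_radical (component F b)) = 2 ^ k"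
proof -
  let ?f = "component F b"
  have q: "quadratic_plus_affine ?f"
    using assms by (simp add: is_quadratic_def)
  have W: "(walsh F b a)\<^sup>2
      = (if a \<in> walsh_support ?f then 2 ^ CARD('n) * int (card (polar_radical ?f)) else 0)" for a
    unfolding walsh_def by (rule walsh_square[OF q])
  obtain a0 where a0: "a0 \<in> walsh_support ?f"
    using walsh_support_nonempty[OF q] by blast
  show ?thesis
  proof
    assume "has_amplitude_exp F b k"
    then obtain a where "(walsh F b a)\<^sup>2 = 2 ^ (CARD('n) + k)"
      unfolding has_amplitude_exp_def by blast
    then have "2 ^ CARD('n) * int (card (polar_radical ?f)) = 2 ^ CARD('n) * 2 ^ k"
      using W[of a] by (simp add: power_add split: if_splits)
    then show "card (polar_radical ?f) = 2 ^ k"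
      by simp
  next
    assume card: "card (polar_radical ?f) = 2 ^ k"
    have "walsh F b a = 0 \<or> (walsh F b a)\<^sup>2 = 2 ^ (CARD('n) + k)" for a
      using W[of a] card by (cases "a \<in> walsh_support ?f") (simp_all add: power_add)
    moreover have "(walsh F b a0)\<^sup>2 = 2 ^ (CARD('n) + k)"
      using W[of a0] card a0 by (simp add: power_add)
    ultimately show "has_amplitude_exp F b k"
      unfolding has_amplitude_exp_def by blast
  qed
qed

lemma amp_dist_eq_card_polar_radical:
  fixes F :: "bit ^ 'n \<Rightarrow> bit ^ 'n"
  assumes "is_quadratic F"
  shows "amp_dist F i = card {b. b \<noteq> 0 \<and> card (polar_radical (component F b)) = 2 ^ i}"
  unfolding amp_dist_def by (simp add: has_amplitude_exp_iff[OF assms])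

definition polar_map :: "(bit ^ 'n \<Rightarrow> bit ^ 'n) \<Rightarrow> bit ^ 'n \<Rightarrow> bit ^ 'n \<Rightarrow> bit ^ 'n" where
  "polar_map F u x = F (x + u) + F x + F u + F 0"

lemma dotp_polar_map: "dotp b (polar_map F u x) = polar (component F b) u x"
  by (simp add: polar_map_def polar_def component_def dotp_add_right)

lemma is_APN_polar_map_eq_0:
  fixes F :: "bit ^ 'n \<Rightarrow> bit ^ 'n"
  assumes apn: "is_APN F" and a: "a \<noteq> 0"
  shows "{x. polar_map F a x = 0} = {0, a}"
proof -
  let ?S = "{x. F x + F (x + a) = F 0 + F (0 + a)}"
  have "polar_map F a x = (F x + F (x + a)) + (F 0 + F (0 + a))" for x
    by (simp add: polar_map_def ac_simps)
  then have S: "{x. polar_map F a x = 0} = ?S"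
    by (simp add: vec_add_eq_0_iff)
  have "card ?S \<le> 2"
    using apn a unfolding is_APN_def by blast
  moreover have "card {0, a} = 2"
    using a by simp
  moreover have "{0, a} \<subseteq> ?S"
    by (auto simp: add.commute)
  ultimately show ?thesis
    unfolding S by (intro card_seteq[symmetric]) auto
qed

lemma card_polar_radical_containing:
  fixes F :: "bit ^ 'n \<Rightarrow> bit ^ 'n"
  assumes q: "is_quadratic F" and apn: "is_APN F" and a: "a \<noteq> 0"
  shows "card {b. a \<in> polar_radical (component F b)} = 2"
proof -
  have "int (card {b. a \<in> polar_radical (component F b)}) * 2 ^ CARD('n)
      = (\<Sum>b\<in>UNIV. \<Sum>x\<in>UNIV. sgn_bit (polar (component F b) a x))"
    using q by (simp add: is_quadratic_def sum_sgn_bit_polar sum.If_cases)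
  also have "\<dots> = (\<Sum>x\<in>UNIV. \<Sum>b\<in>UNIV. sgn_bit (dotp b (polar_map F a x)))"
    by (subst sum.swap) (simp add: dotp_polar_map)
  also have "\<dots> = int (card {x. polar_map F a x = 0}) * 2 ^ CARD('n)"
    by (simp add: sum_sgn_bit_dotp sum.If_cases)
  also have "\<dots> = 2 * 2 ^ CARD('n)"
    using a by (simp add: is_APN_polar_map_eq_0[OF apn a])
  finally show ?thesis
    by simp
qed

lemma ex1_polar_radical_containing:
  fixes F :: "bit ^ 'n \<Rightarrow> bit ^ 'n"
  assumes q: "is_quadratic F" and apn: "is_APN F" and a: "a \<noteq> 0"
  shows "\<exists>!b. b \<noteq> 0 \<and> a \<in> polar_radical (component F b)"
proof -
  let ?B = "{b. a \<in> polar_radical (component F b)}"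
  have "0 \<in> ?B"
    by (simp add: polar_radical_def polar_def component_def)
  then have "card (?B - {0}) = Suc 0"
    using card_polar_radical_containing[OF q apn a] by (simp add: card_Diff_singleton)
  then obtain b where b: "?B - {0} = {b}"
    by (auto simp only: card_1_singleton_iff)
  have "c \<noteq> 0 \<and> a \<in> polar_radical (component F c) \<longleftrightarrow> c = b" for c
    using b by (simp only: set_eq_iff Diff_iff mem_Collect_eq singleton_iff) blast
  then show ?thesis
    by simp
qed

lemma polar_radicals_inter:
  fixes F :: "bit ^ 'n \<Rightarrow> bit ^ 'n"
  assumes "is_quadratic F" "is_APN F" "b \<noteq> 0" "c \<noteq> 0" "b \<noteq> c"
  shows "polar_radical (component F b) \<inter> polar_radical (component F c) = {0}"
proof -
  have "u = 0" if "u \<in> polar_radical (component F b)" "u \<in> polar_radical (component F c)" for u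
    using that assms ex1_polar_radical_containing[OF assms(1,2), of u] by blast
  then show ?thesis
    by auto
qed

lemma sum_card_polar_radical:
  fixes F :: "bit ^ 'n \<Rightarrow> bit ^ 'n"
  assumes q: "is_quadratic F" and apn: "is_APN F"
  shows "(\<Sum>b\<in>UNIV - {0}. card (polar_radical (component F b)) - 1) = 2 ^ CARD('n) - 1"
proof -
  let ?R = "\<lambda>b. polar_radical (component F b) - {0}"
  have disjoint: "?R b \<inter> ?R c = {}" if "b \<in> UNIV - {0}" "c \<in> UNIV - {0}" "b \<noteq> c" for b c
    using polar_radicals_inter[OF q apn, of b c] that by blast
  have cover: "u \<in> (\<Union>b\<in>UNIV - {0}. ?R b)" if u: "u \<noteq> 0" for u
  proof -
    obtain b where "b \<noteq> 0" "u \<in> polar_radical (component F b)"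
      using ex1_polar_radical_containing[OF q apn u] by blast
    with u show ?thesis
      by blast
  qed
  have "(\<Sum>b\<in>UNIV - {0}. card (polar_radical (component F b)) - 1)
      = (\<Sum>b\<in>UNIV - {0}. card (?R b))"
    by (simp add: card_Diff_singleton)
  also have "\<dots> = card (\<Union>b\<in>UNIV - {0}. ?R b)"
    using disjoint by (intro card_UN_disjoint[symmetric]) auto
  also have "(\<Union>b\<in>UNIV - {0}. ?R b) = UNIV - {0}"
    using cover by blast
  finally show ?thesis
    by (simp add: card_Diff_singleton)
qed

lemma card_mult_card_le_if_inter_zero:
  fixes U V :: "(bit ^ 'n) set"
  assumes U: "\<And>u u'. u \<in> U \<Longrightarrow> u' \<in> U \<Longrightarrow> u + u' \<in> U"
    and V: "\<And>v v'. v \<in> V \<Longrightarrow> v' \<in> V \<Longrightarrow> v + v' \<in> V"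
    and UV: "U \<inter> V \<subseteq> {0}"
  shows "card U * card V \<le> 2 ^ CARD('n)"
proof -
  have "inj_on (\<lambda>(u, v). u + v) (U \<times> V)"
  proof (rule inj_onI, clarify)
    fix u v u' v'
    assume u: "u \<in> U" "u' \<in> U" and v: "v \<in> V" "v' \<in> V" and sum_eq: "u + v = u' + v'"
    have "(u + u') + (v + v') = (u + v) + (u' + v')"
      by (simp add: ac_simps)
    then have diff_eq: "u + u' = v + v'"
      by (simp add: sum_eq vec_add_eq_0_iff)
    have "u + u' \<in> U \<inter> V"
      using U[OF u] V[OF v] diff_eq by simp
    with UV diff_eq show "u = u' \<and> v = v'"
      by (auto simp: vec_add_eq_0_iff)
  qed
  then have "card (U \<times> V) \<le> card (UNIV :: (bit ^ 'n) set)"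
    by (rule card_inj_on_le) auto
  then show ?thesis
    by (simp add: card_cartesian_product)
qed

lemma polar_radical_exps_le:
  fixes F :: "bit ^ 'n \<Rightarrow> bit ^ 'n"
  assumes q: "is_quadratic F" and apn: "is_APN F"
    and "b \<noteq> 0" "c \<noteq> 0" "b \<noteq> c"
    and "card (polar_radical (component F b)) = 2 ^ i"
    and "card (polar_radical (component F c)) = 2 ^ j"
  shows "i + j \<le> CARD('n)"
proof -
  have "card (polar_radical (component F b)) * card (polar_radical (component F c)) \<le> 2 ^ CARD('n)"
    using q polar_radicals_inter[OF q apn \<open>b \<noteq> 0\<close> \<open>c \<noteq> 0\<close> \<open>b \<noteq> c\<close>]
    by (intro card_mult_card_le_if_inter_zero) (auto simp: is_quadratic_def polar_radical_add_closed)
  then have "(2::nat) ^ (i + j) \<le> 2 ^ CARD('n)"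
    using assms(6,7) by (simp add: power_add)
  then show ?thesis
    by simp
qed

lemma sum_amp_dist:
  fixes F :: "bit ^ 'n \<Rightarrow> bit ^ 'n"
  assumes ev: "even CARD('n)" and q: "is_quadratic F" and apn: "is_APN F"
  shows "(\<Sum>i = 1..CARD('n) div 2. amp_dist F (2 * i) * (2 ^ (2 * i) - 1)) = 2 ^ CARD('n) - 1"
proof -
  let ?r = "\<lambda>b. card (polar_radical (component F b))"
  let ?p = "\<lambda>i::nat. (2::nat) ^ (2 * i)"
  have r_range: "?r b \<in> ?p ` {0..CARD('n) div 2}" for b
  proof -
    obtain m where "m \<le> CARD('n)" "?r b = 2 ^ m" "even (CARD('n) + m)"
      using card_polar_radical_eq_power2[of "component F b"] q unfolding is_quadratic_def by blast
    with ev show ?thesis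
      by (auto elim!: evenE)
  qed
  have "2 ^ CARD('n) - 1 = (\<Sum>b\<in>UNIV - {0}. ?r b - 1)"
    using sum_card_polar_radical[OF q apn] by simp
  also have "\<dots> = (\<Sum>k\<in>?p ` {0..CARD('n) div 2}. \<Sum>b\<in>{b \<in> UNIV - {0}. ?r b = k}. ?r b - 1)"
    using r_range by (intro sum.group[symmetric]) auto
  also have "\<dots> = (\<Sum>i = 0..CARD('n) div 2. amp_dist F (2 * i) * (2 ^ (2 * i) - 1))"
    by (subst sum.reindex) (auto simp: inj_on_def amp_dist_eq_card_polar_radical[OF q] Collect_conj_eq)
  also have "\<dots> = (\<Sum>i = 1..CARD('n) div 2. amp_dist F (2 * i) * (2 ^ (2 * i) - 1))"
    by (simp add: sum.atLeast_Suc_atMost)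
  finally show ?thesis ..
qed

lemma amp_dist_le_1:
  fixes F :: "bit ^ 'n \<Rightarrow> bit ^ 'n"
  assumes q: "is_quadratic F" and apn: "is_APN F" and i: "i > CARD('n) div 2"
  shows "amp_dist F i \<le> 1"
proof -
  let ?S = "{b. b \<noteq> 0 \<and> card (polar_radical (component F b)) = 2 ^ i}"
  have "b = c" if b: "b \<in> ?S" and c: "c \<in> ?S" for b c
  proof (rule ccontr)
    assume "b \<noteq> c"
    with b c have "i + i \<le> CARD('n)"
      by (intro polar_radical_exps_le[OF q apn]) auto
    with i show False
      by linarith
  qed
  then have "card ?S \<le> Suc 0"
    by (simp add: card_le_Suc0_iff_eq)
  then show ?thesis
    by (simp add: amp_dist_eq_card_polar_radical[OF q])
qed

lemma amp_dist_pos_exps_le: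
  fixes F :: "bit ^ 'n \<Rightarrow> bit ^ 'n"
  assumes q: "is_quadratic F" and apn: "is_APN F"
    and "i \<noteq> j" "amp_dist F i \<ge> 1" "amp_dist F j \<ge> 1"
  shows "i + j \<le> CARD('n)"
proof -
  have "\<exists>b. b \<noteq> 0 \<and> card (polar_radical (component F b)) = 2 ^ k" if "amp_dist F k \<ge> 1" for k
  proof (rule ccontr)
    assume "\<not> ?thesis"
    then have "amp_dist F k = 0"
      by (simp add: amp_dist_eq_card_polar_radical[OF q])
    with that show False
      by simp
  qed
  then obtain b c where b: "b \<noteq> 0" "card (polar_radical (component F b)) = 2 ^ i"
    and c: "c \<noteq> 0" "card (polar_radical (component F c)) = 2 ^ j"
    using assms(4,5) by blast
  have "b \<noteq> c"
    using b(2) c(2) \<open>i \<noteq> j\<close> by auto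
  with b c show ?thesis
    by (intro polar_radical_exps_le[OF q apn])
qed

theorem mainTheorem5:
  fixes F :: "bit ^ 'n \<Rightarrow> bit ^ 'n"
  assumes "even CARD('n)"
    and "is_quadratic F"
    and "is_APN F"
  shows "(\<Sum>i = 1..CARD('n) div 2. amp_dist F (2 * i) * (2 ^ (2 * i) - 1)) = 2 ^ CARD('n) - 1
         \<and> (\<forall>i. i > CARD('n) div 2 \<longrightarrow> amp_dist F i \<le> 1)
         \<and> (\<forall>i j. i \<noteq> j \<and> amp_dist F i \<ge> 1 \<and> amp_dist F j \<ge> 1 \<longrightarrow> i + j \<le> CARD('n))"
proof (intro conjI allI impI)
  show "(\<Sum>i = 1..CARD('n) div 2. amp_dist F (2 * i) * (2 ^ (2 * i) - 1)) = 2 ^ CARD('n) - 1"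
    by (rule sum_amp_dist[OF assms])
next
  fix i :: nat
  assume "i > CARD('n) div 2"
  then show "amp_dist F i \<le> 1"
    by (rule amp_dist_le_1[OF assms(2,3)])
next
  fix i j :: nat
  assume "i \<noteq> j \<and> amp_dist F i \<ge> 1 \<and> amp_dist F j \<ge> 1"
  then show "i + j \<le> CARD('n)"
    using amp_dist_pos_exps_le[OF assms(2,3)] by blast
qed

end
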